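(* Let $X$ be a finite alphabet, $\#$ a symbol not in $X$, and $X^\# = X \cup \{\#\}$. Let $w \in (\overline{X^\#})^*$ be a word representing the identity in the polycyclic monoid $P(X^\#)$, and suppose $w = uv$. Then there exists a factorisation $v = st$ such that (i) either $t = \epsilon$ or $t$ begins with a negative generator, and (ii) the word $u \# s \#^{-1} t$ also represents the identity in $P(X^\#)$.
   Context: For an alphabet $Y$, $\overline{Y} = \{y, y^{-1} : y \in Y\}$; letters of $Y$ are positive generators and letters $y^{-1}$ negative generators. The polycyclic monoid $P(Y)$ is the monoid of partial functions on $Y^*$ (composed left to right: $fg$ means apply $f$ then $g$) generated by $y: z \mapsto zy$ (defined everywhere) and $y^{-1}: zy \mapsto z$ (defined on $Y^*y$), $y \in Y$; a word over $\overline{Y}$ represents the identity of $P(Y)$ exactly when it can be reduced to the empty word by successively deleting factors $yy^{-1}$ with $y \in Y$. $\epsilon$ denotes the empty word. *)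

theory Defs
  imports Main
begin

text \<open>Signed generators: Pos y stands for y, Neg y for y^-1.\<close>
datatype 'a gen = Pos 'a | Neg 'a

fun gen_letter :: "'a gen \<Rightarrow> 'a" where
  "gen_letter (Pos y) = y"
| "gen_letter (Neg y) = y"

inductive red_step :: "'a gen list \<Rightarrow> 'a gen list \<Rightarrow> bool" where
  "red_step (a @ [Pos y, Neg y] @ b) (a @ b)"

text \<open>A word represents the identity of the polycyclic monoid iff it
  reduces to the empty word by successively deleting factors y y^-1.\<close>
definition represents_identity :: "'a gen list \<Rightarrow> bool" where
  "represents_identity w \<longleftrightarrow> red_step\<^sup>*\<^sup>* w []"

end

theory Submission
  imports Defs
begin

text \<open>Scanning a word from left to right and cancelling each y^-1 against a y on top
  of a stack computes its reduced form, so a word represents the identity iff the stack ends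
  up empty. If u v does, then v splits into matched blocks y \<dots> y^-1, each of which
  represents the identity, followed by a remainder t that is empty or starts with a negative
  generator (a positive one would have to be matched later). Scanning u t leaves the same
  stack as scanning u v, so u t represents the identity; and since the prefix s of matched
  blocks does, # s #^-1 reduces to the empty word, whence u # s #^-1 t
  reduces to u t.\<close>

text \<open>The stack holds the reduced prefix read so far in reverse order.\<close>
fun push_gen :: "'a gen list \<Rightarrow> 'a gen \<Rightarrow> 'a gen list" where
  "push_gen S (Pos y) = Pos y # S"
| "push_gen (Pos z # S) (Neg y) = (if z = y then S else Neg y # Pos z # S)"
| "push_gen S (Neg y) = Neg y # S"

lemma push_gen_cases:
  "push_gen S x = x # S \<or> (\<exists>y S'. x = Neg y \<and> S = Pos y # S' \<and> push_gen S x = S')"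
  by (cases "(S, x)" rule: push_gen.cases) auto

lemma red_step_foldl_push_gen:
  "red_step a b \<Longrightarrow> foldl push_gen S a = foldl push_gen S b"
  by (induction rule: red_step.induct) simp

lemma rtranclp_red_step_foldl_push_gen:
  "red_step\<^sup>*\<^sup>* a b \<Longrightarrow> foldl push_gen S a = foldl push_gen S b"
  by (induction rule: rtranclp_induct) (auto dest: red_step_foldl_push_gen[where S = S])

lemma rtranclp_red_step_foldl_push_gen_rev:
  "red_step\<^sup>*\<^sup>* (rev S @ w) (rev (foldl push_gen S w))"
proof (induction w arbitrary: S)
  case Nil
  then show ?case by simp
next
  case (Cons x w)
  have "red_step\<^sup>*\<^sup>* (rev S @ x # w) (rev (push_gen S x) @ w)"
    using push_gen_cases[of S x]
  proof
    assume "push_gen S x = x # S"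
    then show ?thesis by simp
  next
    assume "\<exists>y S'. x = Neg y \<and> S = Pos y # S' \<and> push_gen S x = S'"
    then obtain y S' where "x = Neg y" "S = Pos y # S'" "push_gen S x = S'"
      by blast
    then show ?thesis
      using red_step.intros[of "rev S'" y w] by simp
  qed
  then show ?case
    using Cons.IH[of "push_gen S x"] by simp
qed

lemma represents_identity_iff_foldl_push_gen:
  "represents_identity w \<longleftrightarrow> foldl push_gen [] w = []"
  unfolding represents_identity_def
  using rtranclp_red_step_foldl_push_gen[of w "[]" "[]"]
    rtranclp_red_step_foldl_push_gen_rev[of "[]" w]
  by auto

lemma represents_identity_foldl_push_gen:
  "represents_identity s \<Longrightarrow> foldl push_gen S s = S"
  unfolding represents_identity_def
  by (simp add: rtranclp_red_step_foldl_push_gen)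

lemma rtranclp_red_step_context:
  "red_step\<^sup>*\<^sup>* a b \<Longrightarrow> red_step\<^sup>*\<^sup>* (l @ a @ r) (l @ b @ r)"
proof (induction rule: rtranclp_induct)
  case (step b c)
  from \<open>red_step b c\<close> have "red_step (l @ b @ r) (l @ c @ r)"
    by cases (metis append.assoc red_step.intros)
  with step.IH show ?case by simp
qed simp

lemma represents_identity_delete_context:
  "represents_identity s \<Longrightarrow> red_step\<^sup>*\<^sup>* (l @ s @ r) (l @ r)"
  unfolding represents_identity_def
  using rtranclp_red_step_context by fastforce

lemma represents_identity_matched_block:
  assumes "represents_identity s1" and "represents_identity s2"
  shows "represents_identity (Pos y # s1 @ Neg y # s2)"
  using assms by (simp add: represents_identity_iff_foldl_push_gen
      represents_identity_foldl_push_gen)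

lemma Neg_in_foldl_push_gen:
  "Neg z \<in> set S \<Longrightarrow> Neg z \<in> set (foldl push_gen S w)"
proof (induction w arbitrary: S)
  case (Cons x w)
  have "Neg z \<in> set (push_gen S x)"
    using push_gen_cases[of S x] Cons.prems by (metis gen.distinct(1) set_ConsD set_subset_Cons subsetD)
  then show ?case
    using Cons.IH by simp
qed simp

text \<open>A negative letter other than y^-1 met before y is popped would never leave
  the stack.\<close>
lemma foldl_push_gen_Pos_Nil_decomp:
  "foldl push_gen (Pos y # S) r = [] \<Longrightarrow>
    \<exists>s r'. r = s @ Neg y # r' \<and> represents_identity s \<and> foldl push_gen S r' = []"
proof (induction r arbitrary: y S rule: length_induct)
  case (1 r)
  then obtain x r1 where r: "r = x # r1"
    by (cases r) auto
  show ?case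
  proof (cases x)
    case (Pos z)
    with "1.prems" r have "foldl push_gen (Pos z # Pos y # S) r1 = []"
      by simp
    with "1.IH" r obtain s1 r2 where
      r1: "r1 = s1 @ Neg z # r2" and s1: "represents_identity s1"
      and r2: "foldl push_gen (Pos y # S) r2 = []"
      by fastforce
    have "length r2 < length r"
      using r r1 by simp
    with r2 "1.IH" obtain s2 r' where
      "r2 = s2 @ Neg y # r'" "represents_identity s2" "foldl push_gen S r' = []"
      by blast
    with r Pos r1 s1 show ?thesis
      by (intro exI[of _ "Pos z # s1 @ Neg z # s2"] exI[of _ r'])
        (simp add: represents_identity_matched_block)
  next
    case (Neg z)
    have "z = y"
    proof (rule ccontr)
      assume "z \<noteq> y"
      with "1.prems" r Neg have "foldl push_gen (Neg z # Pos y # S) r1 = []"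
        by simp
      with Neg_in_foldl_push_gen[of z "Neg z # Pos y # S" r1] show False
        by simp
    qed
    with "1.prems" r Neg show ?thesis
      by (intro exI[of _ "[]"] exI[of _ r1]) (simp add: represents_identity_def)
  qed
qed

lemma foldl_push_gen_Nil_decomp:
  "foldl push_gen S v = [] \<Longrightarrow>
    \<exists>s t. v = s @ t \<and> (t = [] \<or> (\<exists>y r. t = Neg y # r))
      \<and> represents_identity s \<and> foldl push_gen S t = []"
proof (induction v arbitrary: S rule: length_induct)
  case (1 v)
  show ?case
  proof (cases v)
    case (Cons x r)
    show ?thesis
    proof (cases x)
      case (Pos y)
      with "1.prems" Cons obtain s1 r' where
        r: "r = s1 @ Neg y # r'" and s1: "represents_identity s1"
        and r': "foldl push_gen S r' = []"
        using foldl_push_gen_Pos_Nil_decomp by fastforce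
      have "length r' < length v"
        using Cons r by simp
      with r' "1.IH" obtain s2 t where
        "r' = s2 @ t" "t = [] \<or> (\<exists>y r. t = Neg y # r)"
        "represents_identity s2" "foldl push_gen S t = []"
        by blast
      with Cons Pos r s1 show ?thesis
        by (intro exI[of _ "Pos y # s1 @ Neg y # s2"] exI[of _ t])
          (simp add: represents_identity_matched_block)
    next
      case (Neg y)
      with "1.prems" Cons show ?thesis
        by (intro exI[of _ "[]"] exI[of _ v]) (simp add: represents_identity_def)
    qed
  qed (use "1.prems" in \<open>simp add: represents_identity_def\<close>)
qed

lemma represents_identity_append_decomp:
  assumes "represents_identity (u @ v)"
  shows "\<exists>s t. v = s @ t \<and> (t = [] \<or> (\<exists>y r. t = Neg y # r))
           \<and> represents_identity s \<and> represents_identity (u @ t)"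
  using assms foldl_push_gen_Nil_decomp[of "foldl push_gen [] u" v]
  by (simp add: represents_identity_iff_foldl_push_gen)

theorem lemma4p9:
  fixes X :: "'a set" and h :: 'a and w u v :: "'a gen list"
  assumes "finite X"
    and "h \<notin> X"
    and "gen_letter ` set w \<subseteq> insert h X"
    and "represents_identity w"
    and "w = u @ v"
  shows "\<exists>s t. v = s @ t \<and> (t = [] \<or> (\<exists>y r. t = Neg y # r))
           \<and> represents_identity (u @ [Pos h] @ s @ [Neg h] @ t)"
proof -
  from assms(4,5) obtain s t where
    v: "v = s @ t" and t: "t = [] \<or> (\<exists>y r. t = Neg y # r)"
    and s: "represents_identity s" and ut: "represents_identity (u @ t)"
    using represents_identity_append_decomp by blast
  have "red_step\<^sup>*\<^sup>* (u @ [Pos h] @ s @ [Neg h] @ t) (u @ [Pos h] @ [Neg h] @ t)"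
    using represents_identity_delete_context[OF s, of "u @ [Pos h]" "[Neg h] @ t"] by simp
  also have "red_step (u @ [Pos h] @ [Neg h] @ t) (u @ t)"
    using red_step.intros[of u h t] by simp
  also have "red_step\<^sup>*\<^sup>* (u @ t) []"
    using ut unfolding represents_identity_def .
  finally show ?thesis
    using v t unfolding represents_identity_def by blast
qed

end
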